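(* Let $\lambda_1>0$ and let $\chi:[0,\infty)\to[0,\infty)$ be smooth with $\chi(s)=1$ for $s\in[0,\lambda_1/2)$ and $\chi(s)=0$ for $s>\lambda_1$. For $m\ge2$ and $\lambda\ge0$ set $P_m(\lambda)=2m(\sqrt{\lambda+m^2}-m)+\chi(\lambda)$ and $P_\infty(\lambda)=\lambda+\chi(\lambda)$. Then for every positive integer $k$ there is $C_k>0$ such that for all $m\ge2$ and $\lambda>0$: (1) $\Big|\big(\tfrac{d}{d\lambda}\big)^k\big(\tfrac{P_m(\lambda)}{P_\infty(\lambda)}\big)\Big|\le\dfrac{C_k}{\lambda^k}$; (2) $\Big|\big(\tfrac{d}{d\lambda}\big)^k\big(\tfrac1{P_\infty(\lambda)}-\tfrac1{P_m(\lambda)}\big)\Big|\le\dfrac{C_k}{\lambda^k}\min\Big\{\dfrac1{m^2},\dfrac1{m(\lambda+1)^{1/2}}\Big\}$.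
   Context: In the paper $\lambda_1$ is the smallest Dirichlet eigenvalue of $-\Delta$ on a smooth bounded domain $\Omega\subset\mathbb{R}^n$, $n\ge3$. *)

theory Defs
  imports "HOL-Analysis.Analysis"
begin

text \<open>C-infinity on a set S: all iterated derivatives exist at every point of S
  (meaningful for open S).\<close>
definition smooth_on :: "real set \<Rightarrow> (real \<Rightarrow> real) \<Rightarrow> bool" where
  "smooth_on S f \<longleftrightarrow> (\<forall>k. \<forall>x\<in>S. ((deriv ^^ k) f) differentiable (at x))"

definition Pm :: "(real \<Rightarrow> real) \<Rightarrow> real \<Rightarrow> real \<Rightarrow> real" where
  "Pm chi m l = 2 * m * (sqrt (l + m\<^sup>2) - m) + chi l"

definition Pinf :: "(real \<Rightarrow> real) \<Rightarrow> real \<Rightarrow> real" where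
  "Pinf chi l = l + chi l"

end

theory Submission
  imports Defs "HOL-Complex_Analysis.Cauchy_Integral_Formula"
begin

text \<open>
  The range $\lambda > 0$ is split at $\lambda_1/2$ and $\lambda_1$. Where $\chi$ is constant,
  i.e.\ for $\lambda < \lambda_1/2$ and for $\lambda > \lambda_1$, both functions are real parts of
  holomorphic functions on the right half-plane built from $w = \sqrt{z + m^2} - m$, and Cauchy's
  inequality on the disc of radius $\lambda/2$ around $\lambda$ produces the factor $\lambda^{-k}$.
  Uniformity in $m$ comes from $|w| \le |z|/(2m)$ and $|w + 2m| \ge \sqrt{\mathrm{Re}\, z + m^2} + m$,
  and the decay in $m$ of the second function from $P_m - P_\infty = -w^2$.
  On the compact range $[\lambda_1/2, \lambda_1]$, where $\chi$ is merely smooth, the derivatives of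
  $\chi$ are bounded by compactness, those of $2mw$ and $-w^2$ uniformly in $m$ by Cauchy's
  inequality on discs of fixed radius, and crude Leibniz-type bounds for products and reciprocals
  finish the estimate.
\<close>

section \<open>Smoothness of finite and infinite order\<close>

lemma real_differentiable_iff_field_differentiable:
  fixes f :: "real \<Rightarrow> real"
  shows "f differentiable (at x) \<longleftrightarrow> f field_differentiable (at x)"
  using DERIV_deriv_iff_real_differentiable DERIV_deriv_iff_field_differentiable by blast

lemma higher_deriv_Suc_inner: "(deriv ^^ Suc k) f = (deriv ^^ k) (deriv f)"
  by (simp add: funpow_Suc_right del: funpow.simps)

lemma higher_deriv_cong_open:
  assumes "open S" "x \<in> S" "\<And>y. y \<in> S \<Longrightarrow> f y = g y"
  shows "(deriv ^^ k) f x = (deriv ^^ k) g x"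
  using assms by (intro higher_deriv_cong_ev eventually_nhds_in_open[THEN eventually_mono]) auto

lemma differentiable_cong_open:
  fixes f g :: "real \<Rightarrow> real"
  assumes "open S" "x \<in> S" "\<And>y. y \<in> S \<Longrightarrow> f y = g y" "f differentiable (at x)"
  shows "g differentiable (at x)"
  using assms has_derivative_transform_within_open unfolding differentiable_def by metis

definition differentiable_upto :: "nat \<Rightarrow> real set \<Rightarrow> (real \<Rightarrow> real) \<Rightarrow> bool" where
  "differentiable_upto n S f \<longleftrightarrow> (\<forall>k<n. \<forall>x\<in>S. (deriv ^^ k) f differentiable (at x))"

lemma differentiable_upto_0 [simp]: "differentiable_upto 0 S f"
  by (simp add: differentiable_upto_def)

lemma differentiable_upto_Suc:
  "differentiable_upto (Suc n) S f \<longleftrightarrow>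
     (\<forall>x\<in>S. f differentiable (at x)) \<and> differentiable_upto n S (deriv f)"
  unfolding differentiable_upto_def All_less_Suc2 higher_deriv_Suc_inner by auto

lemma differentiable_upto_SucD:
  "differentiable_upto (Suc n) S f \<Longrightarrow> differentiable_upto n S f"
  unfolding differentiable_upto_def by auto

lemma differentiable_upto_cong:
  assumes "open S" "\<And>y. y \<in> S \<Longrightarrow> f y = g y" "differentiable_upto n S f"
  shows "differentiable_upto n S g"
  unfolding differentiable_upto_def
proof (intro allI impI ballI)
  fix k x assume "k < n" "x \<in> S"
  then have "(deriv ^^ k) f differentiable (at x)"
    using assms(3) unfolding differentiable_upto_def by blast
  moreover have "\<And>y. y \<in> S \<Longrightarrow> (deriv ^^ k) f y = (deriv ^^ k) g y"
    using higher_deriv_cong_open[OF assms(1) _ assms(2)] .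
  ultimately show "(deriv ^^ k) g differentiable (at x)"
    using differentiable_cong_open[OF assms(1) \<open>x \<in> S\<close>] by metis
qed

lemma differentiable_upto_const: "differentiable_upto n S (\<lambda>_. c)"
  unfolding differentiable_upto_def by simp

lemma differentiable_upto_add:
  assumes "open S" "differentiable_upto n S f" "differentiable_upto n S g"
  shows "differentiable_upto n S (\<lambda>x. f x + g x)"
  using assms(2,3)
proof (induction n arbitrary: f g)
  case (Suc n)
  then have df: "\<forall>x\<in>S. f differentiable (at x)" "\<forall>x\<in>S. g differentiable (at x)"
    and IH: "differentiable_upto n S (\<lambda>x. deriv f x + deriv g x)"
    by (auto simp: differentiable_upto_Suc)
  have "differentiable_upto n S (deriv (\<lambda>x. f x + g x))"
    by (rule differentiable_upto_cong[OF assms(1) _ IH])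
       (simp add: df real_differentiable_iff_field_differentiable[symmetric])
  with df show ?case by (simp add: differentiable_upto_Suc)
qed simp

lemma differentiable_upto_mult:
  assumes "open S" "differentiable_upto n S f" "differentiable_upto n S g"
  shows "differentiable_upto n S (\<lambda>x. f x * g x)"
  using assms(2,3)
proof (induction n arbitrary: f g)
  case (Suc n)
  then have df: "\<forall>x\<in>S. f differentiable (at x)" "\<forall>x\<in>S. g differentiable (at x)"
    and f'g': "differentiable_upto n S (deriv f)" "differentiable_upto n S (deriv g)"
    by (auto simp: differentiable_upto_Suc)
  have fg: "differentiable_upto n S f" "differentiable_upto n S g"
    using Suc.prems by (auto dest: differentiable_upto_SucD)
  have "differentiable_upto n S (\<lambda>x. f x * deriv g x + deriv f x * g x)"
    using Suc.IH f'g' fg by (intro differentiable_upto_add[OF assms(1)])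
  then have "differentiable_upto n S (deriv (\<lambda>x. f x * g x))"
    by (rule differentiable_upto_cong[OF assms(1), rotated])
       (simp add: df real_differentiable_iff_field_differentiable[symmetric])
  with df show ?case by (simp add: differentiable_upto_Suc)
qed simp

lemma differentiable_upto_inverse:
  assumes "open S" "differentiable_upto n S v" "\<And>x. x \<in> S \<Longrightarrow> v x \<noteq> 0"
  shows "differentiable_upto n S (\<lambda>x. inverse (v x))"
  using assms(2)
proof (induction n)
  case (Suc n)
  then have dv: "\<forall>x\<in>S. v x \<noteq> 0 \<and> v differentiable (at x)"
    and v': "differentiable_upto n S (deriv v)"
    using assms(3) by (auto simp: differentiable_upto_Suc)
  have IH: "differentiable_upto n S (\<lambda>x. inverse (v x))"
    using Suc differentiable_upto_SucD by blast
  have "differentiable_upto n S (\<lambda>x. (- 1) * deriv v x * (inverse (v x) * inverse (v x)))"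
    using v' IH differentiable_upto_const
    by (intro differentiable_upto_mult[OF assms(1)])
  then have "differentiable_upto n S (deriv (\<lambda>x. inverse (v x)))"
    by (rule differentiable_upto_cong[OF assms(1), rotated])
       (simp add: dv power2_eq_square divide_inverse
          flip: real_differentiable_iff_field_differentiable)
  moreover have "\<forall>x\<in>S. (\<lambda>x. inverse (v x)) differentiable (at x)"
    using dv by (auto intro: differentiable_inverse)
  ultimately show ?case by (simp add: differentiable_upto_Suc)
qed simp

lemma smooth_on_iff_differentiable_upto: "smooth_on S f \<longleftrightarrow> (\<forall>n. differentiable_upto n S f)"
  unfolding smooth_on_def differentiable_upto_def by (metis lessI)

lemma smooth_on_add: "open S \<Longrightarrow> smooth_on S f \<Longrightarrow> smooth_on S g \<Longrightarrow> smooth_on S (\<lambda>x. f x + g x)"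
  by (simp add: smooth_on_iff_differentiable_upto differentiable_upto_add)

lemma smooth_on_mult: "open S \<Longrightarrow> smooth_on S f \<Longrightarrow> smooth_on S g \<Longrightarrow> smooth_on S (\<lambda>x. f x * g x)"
  by (simp add: smooth_on_iff_differentiable_upto differentiable_upto_mult)

lemma smooth_on_const: "smooth_on S (\<lambda>_. c)"
  by (simp add: smooth_on_iff_differentiable_upto differentiable_upto_const)

lemma smooth_on_minus: "open S \<Longrightarrow> smooth_on S f \<Longrightarrow> smooth_on S (\<lambda>x. - f x)"
  using smooth_on_mult[where f = "\<lambda>_. - 1" and g = f, OF _ smooth_on_const] by simp

lemma smooth_on_inverse:
  "open S \<Longrightarrow> smooth_on S v \<Longrightarrow> (\<And>x. x \<in> S \<Longrightarrow> v x \<noteq> 0) \<Longrightarrow> smooth_on S (\<lambda>x. inverse (v x))"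
  by (simp add: smooth_on_iff_differentiable_upto differentiable_upto_inverse)

lemma smooth_on_cong: "open S \<Longrightarrow> (\<And>x. x \<in> S \<Longrightarrow> f x = g x) \<Longrightarrow> smooth_on S f \<Longrightarrow> smooth_on S g"
  by (meson smooth_on_iff_differentiable_upto differentiable_upto_cong)

lemma smooth_on_deriv: "smooth_on S f \<Longrightarrow> smooth_on S (deriv f)"
  by (metis smooth_on_iff_differentiable_upto differentiable_upto_Suc)

lemma smooth_on_imp_differentiable: "smooth_on S f \<Longrightarrow> x \<in> S \<Longrightarrow> f differentiable (at x)"
  unfolding smooth_on_def by (metis funpow_0)

lemma smooth_on_imp_field_differentiable:
  "smooth_on S f \<Longrightarrow> x \<in> S \<Longrightarrow> f field_differentiable (at x)"
  by (simp add: smooth_on_imp_differentiable flip: real_differentiable_iff_field_differentiable)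

lemma smooth_on_higher_derivs_bounded:
  assumes "smooth_on S f" "compact K" "K \<subseteq> S"
  obtains B where "\<forall>j\<le>k. \<forall>x\<in>K. \<bar>(deriv ^^ j) f x\<bar> \<le> B"
proof -
  have "continuous_on K ((deriv ^^ j) f)" for j
    using assms(1,3) unfolding smooth_on_def
    by (intro continuous_at_imp_continuous_on ballI differentiable_imp_continuous_within) auto
  then have "compact (\<Union>j\<le>k. (deriv ^^ j) f ` K)"
    using assms(2) by (intro compact_UN compact_continuous_image) auto
  then obtain B where "\<forall>y\<in>(\<Union>j\<le>k. (deriv ^^ j) f ` K). norm y \<le> B"
    using compact_imp_bounded bounded_iff by blast
  then show ?thesis by (intro that) auto
qed

section \<open>Higher derivatives of sums, products and reciprocals\<close>

lemma higher_deriv_add_smooth_on: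
  assumes "open S" "smooth_on S f" "smooth_on S g" "x \<in> S"
  shows "(deriv ^^ k) (\<lambda>x. f x + g x) x = (deriv ^^ k) f x + (deriv ^^ k) g x"
  using assms(2-4)
proof (induction k arbitrary: f g)
  case (Suc k)
  have diff: "f field_differentiable (at y)" "g field_differentiable (at y)" if "y \<in> S" for y
    using Suc.prems that by (auto intro: smooth_on_imp_field_differentiable)
  have "(deriv ^^ Suc k) (\<lambda>x. f x + g x) x = (deriv ^^ k) (\<lambda>y. deriv f y + deriv g y) x"
    unfolding higher_deriv_Suc_inner
    by (rule higher_deriv_cong_open[OF assms(1) Suc.prems(3)])
       (simp add: diff)
  also have "\<dots> = (deriv ^^ k) (deriv f) x + (deriv ^^ k) (deriv g) x"
    using Suc by (simp add: smooth_on_deriv)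
  finally show ?case by (simp only: higher_deriv_Suc_inner)
qed simp

lemma higher_deriv_minus_smooth_on:
  assumes "open S" "smooth_on S f" "x \<in> S"
  shows "(deriv ^^ k) (\<lambda>x. - f x) x = - (deriv ^^ k) f x"
  using assms(2-3)
proof (induction k arbitrary: f)
  case (Suc k)
  have diff: "f field_differentiable (at y)" if "y \<in> S" for y
    using Suc.prems that by (auto intro: smooth_on_imp_field_differentiable)
  have "(deriv ^^ Suc k) (\<lambda>x. - f x) x = (deriv ^^ k) (\<lambda>y. - deriv f y) x"
    unfolding higher_deriv_Suc_inner
    by (rule higher_deriv_cong_open[OF assms(1) Suc.prems(2)])
       (simp add: diff)
  also have "\<dots> = - (deriv ^^ k) (deriv f) x"
    using Suc by (simp add: smooth_on_deriv)
  finally show ?case by (simp only: higher_deriv_Suc_inner)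
qed simp

lemma higher_deriv_mult_bound:
  assumes "open S" "smooth_on S f" "smooth_on S g" "x \<in> S"
    and "\<forall>j\<le>k. \<bar>(deriv ^^ j) f x\<bar> \<le> A" "\<forall>j\<le>k. \<bar>(deriv ^^ j) g x\<bar> \<le> B"
  shows "\<bar>(deriv ^^ k) (\<lambda>y. f y * g y) x\<bar> \<le> 2 ^ k * A * B"
  using assms(2,3,5,6)
proof (induction k arbitrary: f g)
  case 0
  then show ?case by (simp add: abs_mult mult_mono')
next
  case (Suc k)
  have diff: "f field_differentiable (at y)" "g field_differentiable (at y)" if "y \<in> S" for y
    using Suc.prems that by (auto intro: smooth_on_imp_field_differentiable)
  have "(deriv ^^ Suc k) (\<lambda>y. f y * g y) x = (deriv ^^ k) (\<lambda>y. f y * deriv g y + deriv f y * g y) x"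
    unfolding higher_deriv_Suc_inner
    by (rule higher_deriv_cong_open[OF assms(1) assms(4)])
       (simp add: diff)
  also have "\<dots> = (deriv ^^ k) (\<lambda>y. f y * deriv g y) x + (deriv ^^ k) (\<lambda>y. deriv f y * g y) x"
    using Suc.prems assms(1,4)
    by (intro higher_deriv_add_smooth_on smooth_on_mult smooth_on_deriv)
  finally have split: "(deriv ^^ Suc k) (\<lambda>y. f y * g y) x =
      (deriv ^^ k) (\<lambda>y. f y * deriv g y) x + (deriv ^^ k) (\<lambda>y. deriv f y * g y) x" .
  have "\<forall>j\<le>k. \<bar>(deriv ^^ j) f x\<bar> \<le> A" "\<forall>j\<le>k. \<bar>(deriv ^^ j) g x\<bar> \<le> B"
    "\<forall>j\<le>k. \<bar>(deriv ^^ j) (deriv f) x\<bar> \<le> A" "\<forall>j\<le>k. \<bar>(deriv ^^ j) (deriv g) x\<bar> \<le> B"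
    using Suc.prems(3,4) by (auto simp flip: higher_deriv_Suc_inner)
  then have "\<bar>(deriv ^^ k) (\<lambda>y. f y * deriv g y) x\<bar> \<le> 2 ^ k * A * B"
    "\<bar>(deriv ^^ k) (\<lambda>y. deriv f y * g y) x\<bar> \<le> 2 ^ k * A * B"
    using Suc.IH Suc.prems(1,2) smooth_on_deriv by blast+
  then show ?case unfolding split by simp
qed

lemma higher_deriv_mult_bound_upto:
  assumes "open S" "smooth_on S f" "smooth_on S g" "x \<in> S"
    and "\<forall>j\<le>k. \<bar>(deriv ^^ j) f x\<bar> \<le> A" "\<forall>j\<le>k. \<bar>(deriv ^^ j) g x\<bar> \<le> B"
  shows "\<forall>j\<le>k. \<bar>(deriv ^^ j) (\<lambda>y. f y * g y) x\<bar> \<le> 2 ^ k * A * B"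
proof (intro allI impI)
  fix j assume "j \<le> k"
  have "0 \<le> A" "0 \<le> B"
    using assms(5,6) abs_ge_zero[of "(deriv ^^ 0) f x"] abs_ge_zero[of "(deriv ^^ 0) g x"]
    by (meson le0 order_trans)+
  have "\<bar>(deriv ^^ j) (\<lambda>y. f y * g y) x\<bar> \<le> 2 ^ j * A * B"
    using assms(5,6) \<open>j \<le> k\<close> by (intro higher_deriv_mult_bound[OF assms(1-4)]) auto
  also have "\<dots> \<le> 2 ^ k * A * B"
    using mult_right_mono[OF power_increasing[OF \<open>j \<le> k\<close>, of 2]
        mult_nonneg_nonneg[OF \<open>0 \<le> A\<close> \<open>0 \<le> B\<close>]]
    by (simp add: mult.assoc)
  finally show "\<bar>(deriv ^^ j) (\<lambda>y. f y * g y) x\<bar> \<le> 2 ^ k * A * B" .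
qed

text \<open>The recursion comes from $(1/v)' = - v' \cdot (1/v)^2$ and the product estimate.\<close>

fun inverse_deriv_bound :: "real \<Rightarrow> real \<Rightarrow> nat \<Rightarrow> real" where
  "inverse_deriv_bound B c 0 = 1 / c"
| "inverse_deriv_bound B c (Suc k) =
     max (inverse_deriv_bound B c k) (4 ^ k * B * (inverse_deriv_bound B c k)\<^sup>2)"

lemma higher_deriv_inverse_bound:
  assumes "open S" "smooth_on S v" "\<And>y. y \<in> S \<Longrightarrow> v y \<noteq> 0" "x \<in> S"
    and "0 < c" "c \<le> \<bar>v x\<bar>" "\<forall>j\<le>k. \<bar>(deriv ^^ j) v x\<bar> \<le> B"
  shows "\<forall>j\<le>k. \<bar>(deriv ^^ j) (\<lambda>y. inverse (v y)) x\<bar> \<le> inverse_deriv_bound B c k"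
  using assms(7)
proof (induction k)
  case 0
  then show ?case using assms(5,6) by (simp add: abs_inverse inverse_eq_divide frac_le)
next
  case (Suc k)
  define D where "D = inverse_deriv_bound B c k"
  have IH: "\<forall>j\<le>k. \<bar>(deriv ^^ j) (\<lambda>y. inverse (v y)) x\<bar> \<le> D"
    using Suc unfolding D_def by simp
  have smooth_inv: "smooth_on S (\<lambda>y. inverse (v y))"
    using assms(1-3) by (rule smooth_on_inverse)
  have "(deriv ^^ Suc k) (\<lambda>y. inverse (v y)) x =
      (deriv ^^ k) (\<lambda>y. - deriv v y * (inverse (v y) * inverse (v y))) x"
    unfolding higher_deriv_Suc_inner using assms(2,3)
    by (intro higher_deriv_cong_open[OF assms(1,4)])
       (simp add: smooth_on_imp_field_differentiable power2_eq_square divide_inverse)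
  also have "\<bar>\<dots>\<bar> \<le> 2 ^ k * B * (2 ^ k * D * D)"
  proof (rule higher_deriv_mult_bound[OF assms(1) _ _ assms(4)])
    show "\<forall>j\<le>k. \<bar>(deriv ^^ j) (\<lambda>y. - deriv v y) x\<bar> \<le> B"
      using Suc.prems assms(1,2,4)
      by (auto simp: higher_deriv_minus_smooth_on smooth_on_deriv simp flip: higher_deriv_Suc_inner)
    show "\<forall>j\<le>k. \<bar>(deriv ^^ j) (\<lambda>y. inverse (v y) * inverse (v y)) x\<bar> \<le> 2 ^ k * D * D"
      by (rule higher_deriv_mult_bound_upto[OF assms(1) smooth_inv smooth_inv assms(4) IH IH])
  qed (use assms(1,2) smooth_inv
       in \<open>auto intro: smooth_on_mult smooth_on_deriv smooth_on_minus\<close>)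
  also have "\<dots> = 4 ^ k * B * D\<^sup>2"
    by (simp add: power2_eq_square power_mult_distrib[symmetric])
  finally show ?case
    using IH by (auto simp: D_def le_Suc_eq)
qed

lemma higher_deriv_divide_bound:
  assumes "open S" "smooth_on S f" "smooth_on S v" "\<And>y. y \<in> S \<Longrightarrow> v y \<noteq> 0" "x \<in> S"
    and "0 < c" "c \<le> \<bar>v x\<bar>" "\<forall>j\<le>k. \<bar>(deriv ^^ j) f x\<bar> \<le> A" "\<forall>j\<le>k. \<bar>(deriv ^^ j) v x\<bar> \<le> B"
  shows "\<bar>(deriv ^^ k) (\<lambda>y. f y / v y) x\<bar> \<le> 2 ^ k * A * inverse_deriv_bound B c k"
  using higher_deriv_mult_bound[OF assms(1,2) smooth_on_inverse[OF assms(1,3,4)] assms(5,8)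
      higher_deriv_inverse_bound[OF assms(1,3,4,5,6,7,9)]]
  by (simp add: divide_inverse)

section \<open>Cauchy estimates for real parts of holomorphic functions\<close>

lemma has_real_derivative_Re_holomorphic:
  assumes "F holomorphic_on U" "open U" "of_real x \<in> U"
  shows "((\<lambda>t. Re (F (of_real t))) has_real_derivative Re (deriv F (of_real x))) (at x)"
proof -
  have "(F has_field_derivative deriv F (of_real x)) (at (of_real x))"
    using assms by (rule holomorphic_derivI)
  then have "((\<lambda>t. F (of_real t)) has_vector_derivative deriv F (of_real x)) (at x)"
    by (rule has_vector_derivative_real_field)
  then show ?thesis
    using has_field_derivative_Re by simp
qed

lemma higher_deriv_Re_holomorphic:
  assumes "F holomorphic_on U" "open U" "of_real x \<in> U"
  shows "(deriv ^^ k) (\<lambda>t. Re (F (of_real t))) x = Re ((deriv ^^ k) F (of_real x))"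
  using assms(1,3)
proof (induction k arbitrary: F x)
  case (Suc k)
  have "open (of_real -` U :: real set)"
    using assms(2) by (intro continuous_open_vimage) auto
  then have "(deriv ^^ Suc k) (\<lambda>t. Re (F (of_real t))) x =
      (deriv ^^ k) (\<lambda>t. Re (deriv F (of_real t))) x"
    unfolding higher_deriv_Suc_inner using Suc.prems
    by (intro higher_deriv_cong_open DERIV_imp_deriv has_real_derivative_Re_holomorphic[OF _ assms(2)])
       auto
  also have "\<dots> = Re ((deriv ^^ k) (deriv F) (of_real x))"
    by (rule Suc.IH[OF holomorphic_deriv[OF Suc.prems(1) assms(2)] Suc.prems(2)])
  finally show ?case
    by (simp only: higher_deriv_Suc_inner)
qed simp

lemma smooth_on_Re_holomorphic:
  assumes "F holomorphic_on U" "open U" "open T"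
    and "\<And>t. t \<in> T \<Longrightarrow> of_real t \<in> U \<and> f t = Re (F (of_real t))"
  shows "smooth_on T f"
  unfolding smooth_on_def
proof (intro allI ballI)
  fix k x assume "x \<in> T"
  have "(\<lambda>t. Re ((deriv ^^ k) F (of_real t))) differentiable (at x)"
    using has_real_derivative_Re_holomorphic[OF holomorphic_higher_deriv[OF assms(1,2)] assms(2)]
      assms(4) \<open>x \<in> T\<close> real_differentiable_def by blast
  moreover have "(\<lambda>t. Re ((deriv ^^ k) F (of_real t))) y = (deriv ^^ k) f y" if "y \<in> T" for y
    using assms(4) that higher_deriv_cong_open[OF assms(3) that, of f "\<lambda>t. Re (F (of_real t))"]
      higher_deriv_Re_holomorphic[OF assms(1,2)] by auto
  ultimately show "(deriv ^^ k) f differentiable (at x)"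
    by (rule differentiable_cong_open[OF assms(3) \<open>x \<in> T\<close>, rotated])
qed

lemma smooth_on_ident: "smooth_on S (\<lambda>x. x)"
  using smooth_on_Re_holomorphic[of "\<lambda>z. z" UNIV UNIV "\<lambda>t. t"] unfolding smooth_on_def by simp

lemma cball_of_real_bounds:
  assumes "z \<in> cball (of_real x) r"
  shows "x - r \<le> Re z" "cmod z \<le> \<bar>x\<bar> + r"
proof -
  have "cmod (z - of_real x) \<le> r"
    using assms by (simp add: dist_norm norm_minus_commute)
  then show "x - r \<le> Re z" "cmod z \<le> \<bar>x\<bar> + r"
    using abs_Re_le_cmod[of "z - of_real x"] norm_triangle_sub[of z "of_real x"] by auto
qed

lemma higher_deriv_bound_Re_holomorphic:
  assumes "F holomorphic_on U" "open U" "open T" "x \<in> T"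
    and "\<And>t. t \<in> T \<Longrightarrow> f t = Re (F (of_real t))"
    and "cball (of_real x) r \<subseteq> U" "0 < r" "\<And>z. z \<in> cball (of_real x) r \<Longrightarrow> cmod (F z) \<le> M"
  shows "\<bar>(deriv ^^ k) f x\<bar> \<le> fact k * M / r ^ k"
proof -
  have "of_real x \<in> U"
    using assms(6,7) by auto
  then have "(deriv ^^ k) f x = Re ((deriv ^^ k) F (of_real x))"
    using higher_deriv_cong_open[OF assms(3,4,5)] higher_deriv_Re_holomorphic[OF assms(1,2)] by simp
  also have "\<bar>\<dots>\<bar> \<le> cmod ((deriv ^^ k) F (of_real x))"
    by (rule abs_Re_le_cmod)
  also have "\<dots> \<le> fact k * M / r ^ k"
  proof (rule Cauchy_inequality)
    show "F holomorphic_on ball (of_real x) r"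
      using assms(1,6) ball_subset_cball holomorphic_on_subset by blast
    show "continuous_on (cball (of_real x) r) F"
      using assms(1,2,6) holomorphic_on_imp_continuous_on continuous_on_subset by blast
  qed (use assms(7,8) in \<open>auto simp: dist_norm\<close>)
  finally show ?thesis .
qed

section \<open>The holomorphic extension of $\sqrt{\lambda + m^2} - m$\<close>

definition sqrt_gap :: "real \<Rightarrow> complex \<Rightarrow> complex" where
  "sqrt_gap m z = csqrt (z + of_real (m\<^sup>2)) - of_real m"

lemma sqrt_gap_holomorphic: "sqrt_gap m holomorphic_on {z. 0 < Re z}"
proof -
  have "0 < Re (z + of_real (m\<^sup>2))" if "0 < Re z" for z
    using that by (simp add: add_pos_nonneg)
  then show ?thesis
    unfolding sqrt_gap_def[abs_def]
    by (intro holomorphic_intros holomorphic_on_csqrt') (fastforce simp: complex_nonpos_Reals_iff)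
qed

lemma sqrt_gap_of_real: "0 \<le> x \<Longrightarrow> sqrt_gap m (of_real x) = of_real (sqrt (x + m\<^sup>2) - m)"
  unfolding sqrt_gap_def by (simp add: csqrt_of_real flip: of_real_add of_real_power)

lemma sqrt_gap_factor: "z = sqrt_gap m z * (sqrt_gap m z + 2 * of_real m)"
proof -
  have "(csqrt (z + of_real (m\<^sup>2)))\<^sup>2 = z + of_real (m\<^sup>2)"
    by (rule power2_csqrt)
  then show ?thesis
    unfolding sqrt_gap_def by (simp add: power2_eq_square algebra_simps)
qed

lemma Re_sqrt_gap_ge:
  assumes "0 \<le> Re z"
  shows "sqrt (Re z + m\<^sup>2) - m \<le> Re (sqrt_gap m z)"
proof -
  let ?w = "z + of_real (m\<^sup>2)"
  have "Re ?w \<le> (cmod ?w + Re ?w) / 2"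
    using complex_Re_le_cmod[of ?w] by simp
  then have "sqrt (Re ?w) \<le> sqrt ((cmod ?w + Re ?w) / 2)"
    by (rule real_sqrt_le_mono)
  then show ?thesis
    unfolding sqrt_gap_def by simp
qed

lemma norm_sqrt_gap_add_ge:
  assumes "0 \<le> Re z" "0 \<le> m"
  shows "sqrt (Re z + m\<^sup>2) + m \<le> cmod (sqrt_gap m z + 2 * of_real m)"
  using Re_sqrt_gap_ge[OF assms(1), of m] complex_Re_le_cmod[of "sqrt_gap m z + 2 * of_real m"]
  by simp

lemma Re_sqrt_gap_nonneg: "0 \<le> Re z \<Longrightarrow> 0 \<le> m \<Longrightarrow> 0 \<le> Re (sqrt_gap m z)"
  using Re_sqrt_gap_ge[of z m] real_sqrt_le_mono[of "m\<^sup>2" "Re z + m\<^sup>2"] by simp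

lemma norm_sqrt_gap_le:
  assumes "0 \<le> Re z" "0 < m"
  shows "cmod (sqrt_gap m z) \<le> cmod z / (2 * m)"
proof -
  have "m \<le> sqrt (Re z + m\<^sup>2)"
    using assms real_sqrt_le_mono[of "m\<^sup>2" "Re z + m\<^sup>2"] by simp
  then have "2 * m \<le> cmod (sqrt_gap m z + 2 * of_real m)"
    using norm_sqrt_gap_add_ge[OF assms(1) less_imp_le[OF assms(2)]] by linarith
  then have "cmod (sqrt_gap m z) * (2 * m) \<le> cmod z"
    using sqrt_gap_factor[of z m] assms(2)
    by (metis norm_ge_zero norm_mult mult_left_mono)
  then show ?thesis
    using assms(2) by (simp add: field_simps)
qed

lemma norm_add_one_ge: "0 \<le> Re z \<Longrightarrow> 1 \<le> cmod (z + 1)"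
  using complex_Re_le_cmod[of "z + 1"] by simp

lemma norm_sqrt_gap_affine_ge:
  assumes "0 \<le> Re z" "0 \<le> m"
  shows "1 \<le> cmod (2 * of_real m * sqrt_gap m z + 1)"
  using norm_add_one_ge[of "2 * of_real m * sqrt_gap m z"] Re_sqrt_gap_nonneg[OF assms] assms(2)
  by simp

lemma norm_divide_le_of_one_le:
  fixes a b :: "'a :: real_normed_field"
  assumes "1 \<le> norm b"
  shows "norm (a / b) \<le> norm a"
proof -
  have "norm (a / b) = norm a / norm b"
    by (rule norm_divide)
  also have "\<dots> \<le> norm a / 1"
    using assms by (intro divide_left_mono) auto
  finally show ?thesis
    by simp
qed

lemma norm_sqrt_gap_affine_div_le:
  assumes "0 \<le> Re z" "0 < m"
  shows "cmod ((2 * of_real m * sqrt_gap m z + 1) / (z + 1)) \<le> cmod z + 1"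
proof -
  have "cmod ((2 * of_real m * sqrt_gap m z + 1) / (z + 1)) \<le> cmod (2 * of_real m * sqrt_gap m z + 1)"
    using norm_add_one_ge[OF assms(1)] by (rule norm_divide_le_of_one_le)
  also have "\<dots> \<le> 2 * m * cmod (sqrt_gap m z) + 1"
    using norm_triangle_ineq[of "2 * of_real m * sqrt_gap m z" 1] assms(2) by (simp add: norm_mult)
  also have "\<dots> \<le> cmod z + 1"
    using norm_sqrt_gap_le[OF assms] assms(2) by (simp add: divide_simps mult.commute)
  finally show ?thesis .
qed

lemma norm_sqrt_gap_square_div_le:
  assumes "0 \<le> Re z" "0 < m"
  shows "cmod (- (sqrt_gap m z)\<^sup>2 / ((z + 1) * (2 * of_real m * sqrt_gap m z + 1)))
    \<le> (cmod z / (2 * m))\<^sup>2"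
proof -
  have "1 \<le> cmod ((z + 1) * (2 * of_real m * sqrt_gap m z + 1))"
    using mult_mono[OF norm_add_one_ge norm_sqrt_gap_affine_ge] assms by (simp add: norm_mult)
  then have "cmod (- (sqrt_gap m z)\<^sup>2 / ((z + 1) * (2 * of_real m * sqrt_gap m z + 1)))
      \<le> (cmod (sqrt_gap m z))\<^sup>2"
    by (metis norm_divide_le_of_one_le norm_minus_cancel norm_power)
  also have "\<dots> \<le> (cmod z / (2 * m))\<^sup>2"
    using norm_sqrt_gap_le[OF assms] by (simp add: power_mono)
  finally show ?thesis .
qed

lemma sqrt_shift_eq_Re_sqrt_gap:
  assumes "0 \<le> t"
  shows "2 * m * (sqrt (t + m\<^sup>2) - m) = Re (2 * of_real m * sqrt_gap m (of_real t))"
    and "- (sqrt (t + m\<^sup>2) - m)\<^sup>2 = Re (- (sqrt_gap m (of_real t))\<^sup>2)"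
  using assms by (simp_all add: sqrt_gap_of_real flip: of_real_power of_real_minus)

lemma sqrt_gap_terms_holomorphic:
  "(\<lambda>z. 2 * of_real m * sqrt_gap m z) holomorphic_on {z. 0 < Re z}"
  "(\<lambda>z. - (sqrt_gap m z)\<^sup>2) holomorphic_on {z. 0 < Re z}"
  by (auto intro!: holomorphic_intros sqrt_gap_holomorphic)

lemma smooth_on_sqrt_shift:
  "smooth_on {0<..} (\<lambda>t. 2 * m * (sqrt (t + m\<^sup>2) - m))"
  "smooth_on {0<..} (\<lambda>t. - (sqrt (t + m\<^sup>2) - m)\<^sup>2)"
proof -
  show "smooth_on {0<..} (\<lambda>t. 2 * m * (sqrt (t + m\<^sup>2) - m))"
    by (rule smooth_on_Re_holomorphic[OF sqrt_gap_terms_holomorphic(1)])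
       (auto simp: open_halfspace_Re_gt sqrt_shift_eq_Re_sqrt_gap)
  show "smooth_on {0<..} (\<lambda>t. - (sqrt (t + m\<^sup>2) - m)\<^sup>2)"
    by (rule smooth_on_Re_holomorphic[OF sqrt_gap_terms_holomorphic(2)])
       (auto simp: open_halfspace_Re_gt sqrt_shift_eq_Re_sqrt_gap)
qed

lemma higher_deriv_sqrt_shift_bounds:
  assumes "0 < m" "0 < r" "r < x"
  shows "\<bar>(deriv ^^ j) (\<lambda>t. 2 * m * (sqrt (t + m\<^sup>2) - m)) x\<bar> \<le> fact j * (x + r) / r ^ j"
    and "\<bar>(deriv ^^ j) (\<lambda>t. - (sqrt (t + m\<^sup>2) - m)\<^sup>2) x\<bar> \<le> fact j * ((x + r) / (2 * m))\<^sup>2 / r ^ j"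
proof -
  let ?D = "cball (of_real x) r"
  have D: "0 < Re z" "cmod (sqrt_gap m z) \<le> (x + r) / (2 * m)" if "z \<in> ?D" for z
  proof -
    show "0 < Re z"
      using cball_of_real_bounds(1)[OF that] assms(3) by simp
    have "cmod z / (2 * m) \<le> (x + r) / (2 * m)"
      using cball_of_real_bounds(2)[OF that] assms by (simp add: divide_right_mono)
    then show "cmod (sqrt_gap m z) \<le> (x + r) / (2 * m)"
      using norm_sqrt_gap_le[of z m] \<open>0 < Re z\<close> assms(1) by simp
  qed
  note holo = sqrt_gap_terms_holomorphic[of m]
  show "\<bar>(deriv ^^ j) (\<lambda>t. 2 * m * (sqrt (t + m\<^sup>2) - m)) x\<bar> \<le> fact j * (x + r) / r ^ j"
  proof (rule higher_deriv_bound_Re_holomorphic[OF holo(1) _ open_greaterThan _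
        sqrt_shift_eq_Re_sqrt_gap(1)])
    show "cmod (2 * of_real m * sqrt_gap m z) \<le> x + r" if "z \<in> ?D" for z
      using D(2)[OF that] assms(1) by (simp add: norm_mult divide_simps mult.commute)
  qed (use assms D in \<open>auto simp: open_halfspace_Re_gt subset_iff\<close>)
  show "\<bar>(deriv ^^ j) (\<lambda>t. - (sqrt (t + m\<^sup>2) - m)\<^sup>2) x\<bar> \<le> fact j * ((x + r) / (2 * m))\<^sup>2 / r ^ j"
  proof (rule higher_deriv_bound_Re_holomorphic[OF holo(2) _ open_greaterThan _
        sqrt_shift_eq_Re_sqrt_gap(2)])
    show "cmod (- (sqrt_gap m z)\<^sup>2) \<le> ((x + r) / (2 * m))\<^sup>2" if "z \<in> ?D" for z
      using D(2)[OF that] by (simp add: norm_power power_mono)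
  qed (use assms D in \<open>auto simp: open_halfspace_Re_gt subset_iff\<close>)
qed

lemma fact_divide_power_le:
  fixes M r :: real
  assumes "j \<le> k" "0 \<le> M" "0 < r"
  shows "fact j * M / r ^ j \<le> fact k * max 1 (1 / r) ^ k * M"
proof -
  have "fact j * M / r ^ j = fact j * (1 / r) ^ j * M"
    by (simp add: power_one_over)
  also have "\<dots> \<le> fact k * max 1 (1 / r) ^ k * M"
  proof (intro mult_right_mono mult_mono assms(2))
    show "(1 / r) ^ j \<le> max 1 (1 / r) ^ k"
      using assms(1,3) power_increasing[OF assms(1), of "max 1 (1 / r)"]
        power_mono[of "1 / r" "max 1 (1 / r)" j] by fastforce
  qed (use assms in \<open>auto simp: fact_mono\<close>)
  finally show ?thesis .
qed

lemma sqrt_shift_higher_deriv_uniform_bounds: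
  assumes "0 < L" "1 \<le> m" "L / 2 \<le> l" "l \<le> L" "j \<le> k"
  shows "\<bar>(deriv ^^ j) (\<lambda>t. 2 * m * (sqrt (t + m\<^sup>2) - m)) l\<bar> \<le> fact k * max 1 (4 / L) ^ k * (2 * L)"
    and "\<bar>(deriv ^^ j) (\<lambda>t. - (sqrt (t + m\<^sup>2) - m)\<^sup>2) l\<bar> \<le> fact k * max 1 (4 / L) ^ k * L\<^sup>2 / m\<^sup>2"
proof -
  define r where "r = L / 4"
  have r: "0 < r" "r < l" "1 / r = 4 / L" "l + r \<le> 2 * L"
    unfolding r_def using assms by auto
  have "\<bar>(deriv ^^ j) (\<lambda>t. 2 * m * (sqrt (t + m\<^sup>2) - m)) l\<bar> \<le> fact j * (l + r) / r ^ j"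
    using assms(2) r by (intro higher_deriv_sqrt_shift_bounds) auto
  also have "\<dots> \<le> fact k * max 1 (4 / L) ^ k * (l + r)"
    using fact_divide_power_le[OF assms(5), of "l + r" r] r by simp
  also have "\<dots> \<le> fact k * max 1 (4 / L) ^ k * (2 * L)"
    using r(4) by (intro mult_left_mono) auto
  finally show "\<bar>(deriv ^^ j) (\<lambda>t. 2 * m * (sqrt (t + m\<^sup>2) - m)) l\<bar> \<le> fact k * max 1 (4 / L) ^ k * (2 * L)" .
  have "(l + r) / (2 * m) \<le> L / m"
    using r(4) assms(2) by (simp add: divide_simps)
  then have "((l + r) / (2 * m))\<^sup>2 \<le> (L / m)\<^sup>2"
    using r assms by (intro power_mono) auto
  have "\<bar>(deriv ^^ j) (\<lambda>t. - (sqrt (t + m\<^sup>2) - m)\<^sup>2) l\<bar> \<le> fact j * ((l + r) / (2 * m))\<^sup>2 / r ^ j"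
    using assms(2) r by (intro higher_deriv_sqrt_shift_bounds) auto
  also have "\<dots> \<le> fact k * max 1 (4 / L) ^ k * ((l + r) / (2 * m))\<^sup>2"
    using fact_divide_power_le[OF assms(5), of "((l + r) / (2 * m))\<^sup>2" r] r by simp
  also have "\<dots> \<le> fact k * max 1 (4 / L) ^ k * (L / m)\<^sup>2"
    using \<open>((l + r) / (2 * m))\<^sup>2 \<le> (L / m)\<^sup>2\<close> by (intro mult_left_mono) auto
  finally show "\<bar>(deriv ^^ j) (\<lambda>t. - (sqrt (t + m\<^sup>2) - m)\<^sup>2) l\<bar> \<le> fact k * max 1 (4 / L) ^ k * L\<^sup>2 / m\<^sup>2"
    by (simp add: power_divide)
qed

section \<open>Elementary properties of $P_m$ and $P_\infty$\<close>

lemma sqrt_shift_factor: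
  fixes x m :: real
  assumes "0 \<le> x + m\<^sup>2"
  shows "x = (sqrt (x + m\<^sup>2) - m) * (sqrt (x + m\<^sup>2) - m + 2 * m)"
proof -
  have "(sqrt (x + m\<^sup>2))\<^sup>2 = x + m\<^sup>2"
    using assms by simp
  then show ?thesis
    by (simp add: power2_eq_square algebra_simps)
qed

lemma sqrt_shift_pos: "0 < x \<Longrightarrow> 0 \<le> m \<Longrightarrow> 0 < sqrt (x + m\<^sup>2) - m"
  using real_sqrt_less_mono[of "m\<^sup>2" "x + m\<^sup>2"] by simp

lemma Pm_minus_Pinf: "0 \<le> x \<Longrightarrow> Pm chi m x - Pinf chi x = - (sqrt (x + m\<^sup>2) - m)\<^sup>2"
  using sqrt_shift_factor[of x m] unfolding Pm_def Pinf_def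
  by (simp add: power2_eq_square algebra_simps)

lemma inverse_Pinf_minus_inverse_Pm:
  assumes "0 \<le> x" "Pinf chi x \<noteq> 0" "Pm chi m x \<noteq> 0"
  shows "1 / Pinf chi x - 1 / Pm chi m x = - (sqrt (x + m\<^sup>2) - m)\<^sup>2 / (Pinf chi x * Pm chi m x)"
  using assms Pm_minus_Pinf[OF assms(1), of chi m, symmetric] by (simp add: field_simps)

lemma Pm_lower_bound:
  assumes "0 \<le> x" "1 \<le> m" "0 \<le> chi x"
  shows "x / (1 + x) \<le> Pm chi m x"
proof -
  define g where "g = sqrt (x + m\<^sup>2) - m"
  have x: "x = g * (g + 2 * m)"
    unfolding g_def using assms(1) by (intro sqrt_shift_factor) simp
  have g: "0 \<le> g"
    unfolding g_def using assms(1,2) real_sqrt_le_mono[of "m\<^sup>2" "x + m\<^sup>2"] by simp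
  have "1 \<le> 4 * m\<^sup>2"
    using assms(2) one_le_power[of m 2] by linarith
  then have "g\<^sup>2 \<le> 4 * m\<^sup>2 * g\<^sup>2"
    using mult_right_mono[of 1 "4 * m\<^sup>2" "g\<^sup>2"] by simp
  also have "\<dots> \<le> 2 * m * g * x"
    using x g assms(2) by (simp add: power2_eq_square algebra_simps)
  finally have "x \<le> 2 * m * g * (1 + x)"
    using x by (simp add: power2_eq_square algebra_simps)
  then have "x / (1 + x) \<le> 2 * m * g"
    using assms(1) by (simp add: divide_simps)
  then show ?thesis
    unfolding Pm_def g_def using assms(3) by linarith
qed

lemma Pm_Pinf_positive:
  assumes "\<And>s. 0 < s \<Longrightarrow> 0 \<le> chi s" "1 \<le> m" "0 < x"
  shows "0 < Pinf chi x" "0 < Pm chi m x"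
proof -
  show "0 < Pinf chi x"
    using assms(1,3) unfolding Pinf_def by (simp add: add_pos_nonneg)
  have "0 < x / (1 + x)"
    using assms(3) by simp
  then show "0 < Pm chi m x"
    using Pm_lower_bound[of x m chi] assms(1)[of x] assms(2,3) by linarith
qed

lemma Pm_Pinf_where_chi_vanishes:
  assumes "chi x = 0" "0 < x" "0 < m"
  shows "Pm chi m x / Pinf chi x = 2 * m / (sqrt (x + m\<^sup>2) - m + 2 * m)"
    and "1 / Pinf chi x - 1 / Pm chi m x = - 1 / (2 * m * (sqrt (x + m\<^sup>2) - m + 2 * m))"
proof -
  define g where "g = sqrt (x + m\<^sup>2) - m"
  have x: "x = g * (g + 2 * m)"
    unfolding g_def using assms(2) by (intro sqrt_shift_factor) simp
  have g: "0 < g"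
    unfolding g_def using assms(2,3) by (intro sqrt_shift_pos) simp_all
  show "Pm chi m x / Pinf chi x = 2 * m / (sqrt (x + m\<^sup>2) - m + 2 * m)"
    unfolding Pm_def Pinf_def assms(1) g_def[symmetric] using g assms(3) by (subst x) simp
  show "1 / Pinf chi x - 1 / Pm chi m x = - 1 / (2 * m * (sqrt (x + m\<^sup>2) - m + 2 * m))"
    unfolding Pm_def Pinf_def assms(1) g_def[symmetric] using g assms(3)
    by (subst x) (simp add: divide_simps)
qed

lemma Pm_Pinf_where_chi_is_one:
  assumes "chi x = 1" "0 < x" "0 < m"
  shows "Pm chi m x / Pinf chi x = Re ((2 * of_real m * sqrt_gap m (of_real x) + 1) / (of_real x + 1))"
    and "1 / Pinf chi x - 1 / Pm chi m x =
      Re (- (sqrt_gap m (of_real x))\<^sup>2 / ((of_real x + 1) * (2 * of_real m * sqrt_gap m (of_real x) + 1)))"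
proof -
  define g where "g = sqrt (x + m\<^sup>2) - m"
  have g: "0 < 2 * m * g"
    unfolding g_def using sqrt_shift_pos[of x m] assms(2,3) by simp
  have P: "Pm chi m x = 2 * m * g + 1" "Pinf chi x = x + 1"
    unfolding Pm_def Pinf_def g_def assms(1) by simp_all
  have W: "sqrt_gap m (of_real x) = of_real g"
    unfolding g_def using assms(2) by (simp add: sqrt_gap_of_real)
  show "Pm chi m x / Pinf chi x = Re ((2 * of_real m * sqrt_gap m (of_real x) + 1) / (of_real x + 1))"
    unfolding W P by (simp flip: of_real_add of_real_mult of_real_divide del: of_real_add)
  show "1 / Pinf chi x - 1 / Pm chi m x =
      Re (- (sqrt_gap m (of_real x))\<^sup>2 / ((of_real x + 1) * (2 * of_real m * sqrt_gap m (of_real x) + 1)))"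
    using inverse_Pinf_minus_inverse_Pm[of x chi m] g assms(2) unfolding W P g_def[symmetric]
    by (simp flip: of_real_add of_real_mult of_real_power of_real_divide of_real_minus
        del: of_real_add of_real_mult)
qed

lemma smooth_on_Pinf: "smooth_on {0<..} chi \<Longrightarrow> smooth_on {0<..} (Pinf chi)"
  using smooth_on_add[OF _ smooth_on_ident] unfolding Pinf_def[abs_def] by auto

lemma smooth_on_Pm: "smooth_on {0<..} chi \<Longrightarrow> smooth_on {0<..} (Pm chi m)"
  using smooth_on_sqrt_shift(1) smooth_on_add[of "{0<..}"] unfolding Pm_def[abs_def] by auto

lemma smooth_on_Pm_minus_Pinf: "smooth_on {0<..} (\<lambda>x. Pm chi m x - Pinf chi x)"
  by (rule smooth_on_cong[OF _ _ smooth_on_sqrt_shift(2)]) (simp_all add: Pm_minus_Pinf)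

lemma higher_deriv_Pinf_Pm:
  assumes "smooth_on {0<..} chi" "0 < l"
  shows "(deriv ^^ j) (Pinf chi) l = (deriv ^^ j) (\<lambda>x. x) l + (deriv ^^ j) chi l"
    and "(deriv ^^ j) (Pm chi m) l =
      (deriv ^^ j) (\<lambda>t. 2 * m * (sqrt (t + m\<^sup>2) - m)) l + (deriv ^^ j) chi l"
    and "(deriv ^^ j) (\<lambda>x. Pm chi m x - Pinf chi x) l = (deriv ^^ j) (\<lambda>t. - (sqrt (t + m\<^sup>2) - m)\<^sup>2) l"
proof -
  have S: "open ({0<..} :: real set)" "l \<in> {0<..}"
    using assms(2) by auto
  show "(deriv ^^ j) (Pinf chi) l = (deriv ^^ j) (\<lambda>x. x) l + (deriv ^^ j) chi l"
    using higher_deriv_add_smooth_on[OF S(1) smooth_on_ident assms(1) S(2)]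
    unfolding Pinf_def[abs_def] .
  show "(deriv ^^ j) (Pm chi m) l =
      (deriv ^^ j) (\<lambda>t. 2 * m * (sqrt (t + m\<^sup>2) - m)) l + (deriv ^^ j) chi l"
    using higher_deriv_add_smooth_on[OF S(1) smooth_on_sqrt_shift(1) assms(1) S(2)]
    unfolding Pm_def[abs_def] .
  show "(deriv ^^ j) (\<lambda>x. Pm chi m x - Pinf chi x) l = (deriv ^^ j) (\<lambda>t. - (sqrt (t + m\<^sup>2) - m)\<^sup>2) l"
    by (rule higher_deriv_cong_open[OF S]) (simp add: Pm_minus_Pinf)
qed

section \<open>The estimates on the three ranges of $\lambda$\<close>

definition decay_weight :: "real \<Rightarrow> real \<Rightarrow> real" where
  "decay_weight m l = min (1 / m\<^sup>2) (1 / (m * sqrt (l + 1)))"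

lemma decay_weight_nonneg: "0 \<le> m \<Longrightarrow> 0 \<le> l \<Longrightarrow> 0 \<le> decay_weight m l"
  unfolding decay_weight_def by simp

lemma inverse_square_le_decay_weight:
  assumes "1 \<le> m" "0 \<le> l" "l \<le> L"
  shows "1 / m\<^sup>2 \<le> sqrt (L + 1) * decay_weight m l"
proof -
  have L: "1 \<le> sqrt (L + 1)" "sqrt (l + 1) \<le> sqrt (L + 1)"
    using assms by auto
  have "m * sqrt (l + 1) \<le> m * sqrt (L + 1)"
    using L(2) assms(1) by simp
  also have "\<dots> \<le> m * m * sqrt (L + 1)"
    using L(1) assms(1) by simp
  finally have "1 / m\<^sup>2 \<le> sqrt (L + 1) * (1 / (m * sqrt (l + 1)))"
    using assms(1,2) by (simp add: divide_simps power2_eq_square mult_ac)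
  moreover have "1 / m\<^sup>2 \<le> sqrt (L + 1) * (1 / m\<^sup>2)"
    using mult_right_mono[OF L(1), of "1 / m\<^sup>2"] by simp
  ultimately show ?thesis
    unfolding decay_weight_def min_def by simp
qed

lemma decay_weight_lower_bound:
  assumes "1 \<le> m" "0 < l" "l / 2 \<le> y"
  shows "1 / (2 * m * (sqrt (y + m\<^sup>2) + m)) \<le> decay_weight m l"
proof -
  define q where "q = sqrt (y + m\<^sup>2)"
  have "m \<le> q"
    unfolding q_def using assms real_sqrt_le_mono[of "m\<^sup>2" "y + m\<^sup>2"] by simp
  then have square: "m\<^sup>2 \<le> 2 * m * (q + m)"
    using assms(1) by (simp add: power2_eq_square mult_mono)
  have "1 \<le> m\<^sup>2"
    using assms(1) one_le_power[of m 2] by simp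
  then have "l + 1 \<le> 4 * (y + m\<^sup>2)"
    using assms(2,3) by (simp add: algebra_simps)
  then have "sqrt (l + 1) \<le> sqrt (4 * (y + m\<^sup>2))"
    by (rule real_sqrt_le_mono)
  also have "\<dots> = 2 * q"
    unfolding q_def real_sqrt_mult by simp
  finally have "m * sqrt (l + 1) \<le> m * (2 * q)"
    using assms(1) by simp
  also have "\<dots> \<le> 2 * m * (q + m)"
    using assms(1) by (simp add: algebra_simps)
  finally have root: "m * sqrt (l + 1) \<le> 2 * m * (q + m)" .
  show ?thesis
    unfolding decay_weight_def q_def[symmetric] using assms square root
    by (auto intro!: frac_le simp: power2_eq_square)
qed

definition Pm_estimates :: "(real \<Rightarrow> real) \<Rightarrow> nat \<Rightarrow> real \<Rightarrow> real \<Rightarrow> real \<Rightarrow> bool" where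
  "Pm_estimates chi k C m l \<longleftrightarrow>
     \<bar>(deriv ^^ k) (\<lambda>x. Pm chi m x / Pinf chi x) l\<bar> \<le> C / l ^ k \<and>
     \<bar>(deriv ^^ k) (\<lambda>x. 1 / Pinf chi x - 1 / Pm chi m x) l\<bar> \<le> C / l ^ k * decay_weight m l"

lemma Pm_estimates_mono:
  assumes "Pm_estimates chi k C m l" "C \<le> C'" "0 < l" "0 \<le> m"
  shows "Pm_estimates chi k C' m l"
proof -
  have "C / l ^ k \<le> C' / l ^ k"
    using assms(2,3) by (simp add: divide_right_mono)
  moreover have "0 \<le> decay_weight m l"
    using assms(3,4) by (simp add: decay_weight_nonneg)
  ultimately show ?thesis
    using assms(1) mult_right_mono[of "C / l ^ k" "C' / l ^ k" "decay_weight m l"]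
    unfolding Pm_estimates_def by linarith
qed

lemma Pm_estimates_of_disc_bounds:
  assumes "\<bar>(deriv ^^ k) (\<lambda>x. Pm chi m x / Pinf chi x) l\<bar> \<le> fact k * M / (l / 2) ^ k"
    and "\<bar>(deriv ^^ k) (\<lambda>x. 1 / Pinf chi x - 1 / Pm chi m x) l\<bar> \<le> fact k * M' / (l / 2) ^ k"
    and "0 < l" "M \<le> A" "M' \<le> A * decay_weight m l"
  shows "Pm_estimates chi k (fact k * 2 ^ k * A) m l"
proof -
  have "fact k * M / (l / 2) ^ k \<le> fact k * 2 ^ k * A / l ^ k"
    "fact k * M' / (l / 2) ^ k \<le> fact k * 2 ^ k * A / l ^ k * decay_weight m l"
    using assms(3-5) by (simp_all add: power_divide divide_right_mono mult_left_mono)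
  then show ?thesis
    using assms(1,2) unfolding Pm_estimates_def by linarith
qed

lemma Pm_estimates_of_bounded:
  assumes "\<bar>(deriv ^^ k) (\<lambda>x. Pm chi m x / Pinf chi x) l\<bar> \<le> A"
    and "\<bar>(deriv ^^ k) (\<lambda>x. 1 / Pinf chi x - 1 / Pm chi m x) l\<bar> \<le> A * decay_weight m l"
    and "0 \<le> A" "0 \<le> m" "0 < l" "l \<le> L"
  shows "Pm_estimates chi k (A * L ^ k) m l"
proof -
  have "A \<le> A * L ^ k / l ^ k"
    using assms(3,5,6) mult_left_mono[of "l ^ k" "L ^ k" A] by (simp add: power_mono field_simps)
  moreover have "0 \<le> decay_weight m l"
    using assms(4,5) by (simp add: decay_weight_nonneg)
  ultimately show ?thesis
    using assms(1,2) mult_right_mono[of A "A * L ^ k / l ^ k" "decay_weight m l"]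
    unfolding Pm_estimates_def by auto
qed

lemma Pm_estimates_large:
  assumes "0 \<le> L" "\<And>s. L < s \<Longrightarrow> chi s = 0" "1 \<le> m" "L < l"
  shows "Pm_estimates chi k (fact k * 2 ^ k) m l"
proof -
  let ?U = "{z. 0 < Re z}" and ?D = "cball (of_real l) (l / 2)"
  define R where "R z = sqrt_gap m z + 2 * of_real m" for z
  have l: "0 < l"
    using assms(1,4) by linarith
  have R_ge: "sqrt (Re z + m\<^sup>2) + m \<le> cmod (R z)" "2 * m \<le> cmod (R z)" if "0 < Re z" for z
    using norm_sqrt_gap_add_ge[of z m] real_sqrt_le_mono[of "m\<^sup>2" "Re z + m\<^sup>2"] that assms(3)
    unfolding R_def by auto
  then have "R z \<noteq> 0" if "0 < Re z" for z
    using that assms(3) by force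
  then have holo: "(\<lambda>z. of_real (2 * m) / R z) holomorphic_on ?U"
    "(\<lambda>z. - 1 / (of_real (2 * m) * R z)) holomorphic_on ?U"
    using assms(3) unfolding R_def by (auto intro!: holomorphic_intros sqrt_gap_holomorphic)
  have D: "l / 2 \<le> Re z" "0 < Re z" if "z \<in> ?D" for z
    using cball_of_real_bounds(1)[OF that] l by auto
  have real: "Pm chi m t / Pinf chi t = Re (of_real (2 * m) / R (of_real t))"
    "1 / Pinf chi t - 1 / Pm chi m t = Re (- 1 / (of_real (2 * m) * R (of_real t)))"
    if "t \<in> {L<..}" for t
    using that assms Pm_Pinf_where_chi_vanishes[of chi t m]
    by (simp_all add: R_def sqrt_gap_of_real flip: of_real_mult of_real_add of_real_divide)
  have "\<bar>(deriv ^^ k) (\<lambda>x. Pm chi m x / Pinf chi x) l\<bar> \<le> fact k * 1 / (l / 2) ^ k"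
  proof (rule higher_deriv_bound_Re_holomorphic[OF holo(1) _ open_greaterThan _ real(1)])
    show "cmod (of_real (2 * m) / R z) \<le> 1" if "z \<in> ?D" for z
      using R_ge(2)[OF D(2)[OF that]] assms(3) by (simp add: norm_divide divide_le_eq_1)
  qed (use assms(4) l D in \<open>auto simp: open_halfspace_Re_gt subset_iff\<close>)
  moreover have "\<bar>(deriv ^^ k) (\<lambda>x. 1 / Pinf chi x - 1 / Pm chi m x) l\<bar>
      \<le> fact k * decay_weight m l / (l / 2) ^ k"
  proof (rule higher_deriv_bound_Re_holomorphic[OF holo(2) _ open_greaterThan _ real(2)])
    show "cmod (- 1 / (of_real (2 * m) * R z)) \<le> decay_weight m l" if "z \<in> ?D" for z
    proof -
      have "cmod (- 1 / (of_real (2 * m) * R z)) \<le> 1 / (2 * m * (sqrt (Re z + m\<^sup>2) + m))"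
        using R_ge(1)[OF D(2)[OF that]] D(2)[OF that] assms(3)
        by (auto simp: norm_divide norm_mult intro!: frac_le mult_left_mono mult_pos_pos add_nonneg_pos)
      also have "\<dots> \<le> decay_weight m l"
        using assms(3) l D(1)[OF that] by (rule decay_weight_lower_bound)
      finally show ?thesis .
    qed
  qed (use assms(4) l D in \<open>auto simp: open_halfspace_Re_gt subset_iff\<close>)
  ultimately have "Pm_estimates chi k (fact k * 2 ^ k * 1) m l"
    using l by (rule Pm_estimates_of_disc_bounds) simp_all
  then show ?thesis
    by simp
qed

lemma Pm_estimates_small:
  assumes "\<And>s. 0 < s \<Longrightarrow> s < L \<Longrightarrow> chi s = 1" "1 \<le> m" "0 < l" "l < L"
  shows "Pm_estimates chi k (fact k * 2 ^ k * ((L + 1)\<^sup>2 * sqrt (L + 1))) m l"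
proof -
  let ?U = "{z. 0 < Re z}" and ?D = "cball (of_real l) (l / 2)"
  let ?N = "\<lambda>z. 2 * of_real m * sqrt_gap m z + 1"
  have "z + 1 \<noteq> 0" "?N z \<noteq> 0" if "z \<in> ?U" for z
    using norm_add_one_ge[of z] norm_sqrt_gap_affine_ge[of z m] that assms(2) by force+
  then have holo: "(\<lambda>z. ?N z / (z + 1)) holomorphic_on ?U"
    "(\<lambda>z. - (sqrt_gap m z)\<^sup>2 / ((z + 1) * ?N z)) holomorphic_on ?U"
    by (auto intro!: holomorphic_intros sqrt_gap_holomorphic)
  have real: "Pm chi m t / Pinf chi t = Re (?N (of_real t) / (of_real t + 1))"
    "1 / Pinf chi t - 1 / Pm chi m t = Re (- (sqrt_gap m (of_real t))\<^sup>2 / ((of_real t + 1) * ?N (of_real t)))"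
    if "t \<in> {0<..<L}" for t
    using that assms(1,2) by (intro Pm_Pinf_where_chi_is_one; simp)+
  have D: "0 < Re z" "cmod z \<le> 2 * L" if "z \<in> ?D" for z
    using cball_of_real_bounds[OF that] assms(3,4) by auto
  have "\<bar>(deriv ^^ k) (\<lambda>x. Pm chi m x / Pinf chi x) l\<bar> \<le> fact k * (2 * L + 1) / (l / 2) ^ k"
  proof (rule higher_deriv_bound_Re_holomorphic[OF holo(1) _ open_greaterThanLessThan _ real(1)])
    show "cmod (?N z / (z + 1)) \<le> 2 * L + 1" if "z \<in> ?D" for z
      using norm_sqrt_gap_affine_div_le[of z m] D[OF that] assms(2) by simp
  qed (use assms(3,4) D in \<open>auto simp: open_halfspace_Re_gt subset_iff\<close>)
  moreover have "\<bar>(deriv ^^ k) (\<lambda>x. 1 / Pinf chi x - 1 / Pm chi m x) l\<bar> \<le> fact k * (L / m)\<^sup>2 / (l / 2) ^ k"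
  proof (rule higher_deriv_bound_Re_holomorphic[OF holo(2) _ open_greaterThanLessThan _ real(2)])
    show "cmod (- (sqrt_gap m z)\<^sup>2 / ((z + 1) * ?N z)) \<le> (L / m)\<^sup>2" if "z \<in> ?D" for z
      using norm_sqrt_gap_square_div_le[of z m] D[OF that] assms(2)
        power_mono[of "cmod z / (2 * m)" "L / m" 2] by (simp add: divide_simps)
  qed (use assms(3,4) D in \<open>auto simp: open_halfspace_Re_gt subset_iff\<close>)
  moreover have "2 * L + 1 \<le> (L + 1)\<^sup>2 * sqrt (L + 1)"
    using assms(3,4) mult_mono[of "2 * L + 1" "(L + 1)\<^sup>2" 1 "sqrt (L + 1)"] by (simp add: power2_sum)
  moreover have "(L / m)\<^sup>2 \<le> (L + 1)\<^sup>2 * sqrt (L + 1) * decay_weight m l"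
    using inverse_square_le_decay_weight[of m l L] assms
      mult_mono[of "L\<^sup>2" "(L + 1)\<^sup>2" "1 / m\<^sup>2" "sqrt (L + 1) * decay_weight m l"]
    by (simp add: power_divide power_mono mult.assoc)
  ultimately show ?thesis
    by (rule Pm_estimates_of_disc_bounds[OF _ _ assms(3)])
qed

lemma Pm_Pinf_higher_deriv_uniform_bounds:
  assumes "0 < L" "smooth_on {0<..} chi"
  obtains B where "\<And>m l j. 1 \<le> m \<Longrightarrow> L / 2 \<le> l \<Longrightarrow> l \<le> L \<Longrightarrow> j \<le> k \<Longrightarrow>
      \<bar>(deriv ^^ j) (Pinf chi) l\<bar> \<le> B \<and> \<bar>(deriv ^^ j) (Pm chi m) l\<bar> \<le> B \<and>
      \<bar>(deriv ^^ j) (\<lambda>x. Pm chi m x - Pinf chi x) l\<bar> \<le> B / m\<^sup>2"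
proof -
  have "{L / 2..L} \<subseteq> {0<..}"
    using assms(1) by auto
  then obtain Bc where Bc: "\<forall>j\<le>k. \<forall>x\<in>{L / 2..L}. \<bar>(deriv ^^ j) chi x\<bar> \<le> Bc"
    by (rule smooth_on_higher_derivs_bounded[OF assms(2) compact_Icc])
  then have "\<bar>(deriv ^^ 0) chi L\<bar> \<le> Bc"
    using assms(1) by auto
  then have "0 \<le> Bc"
    using abs_ge_zero order_trans by blast
  define K where "K = fact k * max 1 (4 / L) ^ k"
  have "0 \<le> K"
    unfolding K_def by simp
  define B where "B = K * (2 * L + L\<^sup>2) + (L + 1) + Bc"
  have B: "(L + 1) + Bc \<le> B" "K * (2 * L) + Bc \<le> B" "K * L\<^sup>2 \<le> B"
    unfolding B_def using \<open>0 \<le> K\<close> \<open>0 \<le> Bc\<close> assms(1) by (simp_all add: algebra_simps)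
  show thesis
  proof (rule that[of B], intro conjI)
    fix m l :: real and j :: nat
    assume m: "1 \<le> m" and l: "L / 2 \<le> l" "l \<le> L" and j: "j \<le> k"
    have "0 < l"
      using assms(1) l by simp
    note decomposition = higher_deriv_Pinf_Pm[OF assms(2) this, of j]
    have chi_j: "\<bar>(deriv ^^ j) chi l\<bar> \<le> Bc"
      using Bc j l by auto
    have "\<bar>(deriv ^^ j) (Pinf chi) l\<bar> \<le> (L + 1) + Bc"
      unfolding decomposition using chi_j l by (intro abs_triangle_ineq[THEN order_trans] add_mono) auto
    then show "\<bar>(deriv ^^ j) (Pinf chi) l\<bar> \<le> B"
      using B(1) by linarith
    have "\<bar>(deriv ^^ j) (Pm chi m) l\<bar> \<le> K * (2 * L) + Bc"
      unfolding decomposition K_def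
      using chi_j sqrt_shift_higher_deriv_uniform_bounds(1)[OF assms(1) m l j]
      by (intro abs_triangle_ineq[THEN order_trans] add_mono) auto
    then show "\<bar>(deriv ^^ j) (Pm chi m) l\<bar> \<le> B"
      using B(2) by linarith
    have "\<bar>(deriv ^^ j) (\<lambda>x. Pm chi m x - Pinf chi x) l\<bar> \<le> K * L\<^sup>2 / m\<^sup>2"
      unfolding decomposition K_def by (rule sqrt_shift_higher_deriv_uniform_bounds(2)[OF assms(1) m l j])
    also have "\<dots> \<le> B / m\<^sup>2"
      using B(3) by (simp add: divide_right_mono)
    finally show "\<bar>(deriv ^^ j) (\<lambda>x. Pm chi m x - Pinf chi x) l\<bar> \<le> B / m\<^sup>2" .
  qed
qed

lemma Pm_Pinf_quotient_bounds:
  assumes chi: "smooth_on {0<..} chi" "\<And>s. 0 < s \<Longrightarrow> 0 \<le> chi s" and "1 \<le> m" "0 < l"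
    and bounds: "\<forall>j\<le>k. \<bar>(deriv ^^ j) (Pinf chi) l\<bar> \<le> B" "\<forall>j\<le>k. \<bar>(deriv ^^ j) (Pm chi m) l\<bar> \<le> B"
      "\<forall>j\<le>k. \<bar>(deriv ^^ j) (\<lambda>x. Pm chi m x - Pinf chi x) l\<bar> \<le> E"
    and c: "0 < c" "c \<le> Pinf chi l" "0 < c'" "c' \<le> Pm chi m l"
  shows "\<bar>(deriv ^^ k) (\<lambda>x. Pm chi m x / Pinf chi x) l\<bar> \<le> 2 ^ k * B * inverse_deriv_bound B c k"
    and "\<bar>(deriv ^^ k) (\<lambda>x. 1 / Pinf chi x - 1 / Pm chi m x) l\<bar>
           \<le> 2 ^ k * E * inverse_deriv_bound (2 ^ k * B * B) (c * c') k"
proof -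
  let ?S = "{0<..} :: real set"
  have S: "open ?S" "l \<in> ?S"
    using assms(4) by auto
  have pos: "0 < Pinf chi x" "0 < Pm chi m x" if "x \<in> ?S" for x
    using Pm_Pinf_positive[OF chi(2) assms(3)] that by auto
  have smooth: "smooth_on ?S (Pinf chi)" "smooth_on ?S (Pm chi m)"
    "smooth_on ?S (\<lambda>x. Pm chi m x - Pinf chi x)"
    using chi(1) smooth_on_Pinf smooth_on_Pm smooth_on_Pm_minus_Pinf by blast+
  then have smooth_product: "smooth_on ?S (\<lambda>x. Pinf chi x * Pm chi m x)"
    by (intro smooth_on_mult[OF S(1)])
  show "\<bar>(deriv ^^ k) (\<lambda>x. Pm chi m x / Pinf chi x) l\<bar> \<le> 2 ^ k * B * inverse_deriv_bound B c k"
  proof (rule higher_deriv_divide_bound[OF S(1) smooth(2,1) _ S(2) c(1) _ bounds(2,1)])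
    show "Pinf chi x \<noteq> 0" if "x \<in> ?S" for x
      using pos(1)[OF that] by simp
    show "c \<le> \<bar>Pinf chi l\<bar>"
      using pos(1)[OF S(2)] c(2) by simp
  qed
  have "1 / Pinf chi x - 1 / Pm chi m x = (Pm chi m x - Pinf chi x) / (Pinf chi x * Pm chi m x)"
    if "x \<in> ?S" for x
    using pos[OF that] by (simp add: field_simps)
  then have "(deriv ^^ k) (\<lambda>x. 1 / Pinf chi x - 1 / Pm chi m x) l =
      (deriv ^^ k) (\<lambda>x. (Pm chi m x - Pinf chi x) / (Pinf chi x * Pm chi m x)) l"
    by (rule higher_deriv_cong_open[OF S])
  also have "\<bar>\<dots>\<bar> \<le> 2 ^ k * E * inverse_deriv_bound (2 ^ k * B * B) (c * c') k"
  proof (rule higher_deriv_divide_bound[OF S(1) smooth(3) smooth_product _ S(2) _ _ bounds(3)])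
    show "\<forall>j\<le>k. \<bar>(deriv ^^ j) (\<lambda>x. Pinf chi x * Pm chi m x) l\<bar> \<le> 2 ^ k * B * B"
      by (rule higher_deriv_mult_bound_upto[OF S(1) smooth(1,2) S(2) bounds(1,2)])
    show "c * c' \<le> \<bar>Pinf chi l * Pm chi m l\<bar>"
      using c by (simp add: abs_mult mult_mono)
    show "0 < c * c'"
      using c by simp
    show "Pinf chi x * Pm chi m x \<noteq> 0" if "x \<in> ?S" for x
      using pos[OF that] by simp
  qed
  finally show "\<bar>(deriv ^^ k) (\<lambda>x. 1 / Pinf chi x - 1 / Pm chi m x) l\<bar>
      \<le> 2 ^ k * E * inverse_deriv_bound (2 ^ k * B * B) (c * c') k" .
qed

lemma Pm_estimates_middle:
  assumes "0 < L" "smooth_on {0<..} chi" "\<And>s. 0 < s \<Longrightarrow> 0 \<le> chi s"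
  obtains C where "\<And>m l. 1 \<le> m \<Longrightarrow> L / 2 \<le> l \<Longrightarrow> l \<le> L \<Longrightarrow> Pm_estimates chi k C m l"
proof -
  obtain B where B: "\<And>m l j. 1 \<le> m \<Longrightarrow> L / 2 \<le> l \<Longrightarrow> l \<le> L \<Longrightarrow> j \<le> k \<Longrightarrow>
      \<bar>(deriv ^^ j) (Pinf chi) l\<bar> \<le> B \<and> \<bar>(deriv ^^ j) (Pm chi m) l\<bar> \<le> B \<and>
      \<bar>(deriv ^^ j) (\<lambda>x. Pm chi m x - Pinf chi x) l\<bar> \<le> B / m\<^sup>2"
    using Pm_Pinf_higher_deriv_uniform_bounds[OF assms(1,2)] by blast
  define c c' where "c = L / 2" and "c' = L / (2 + L)"
  define C1 C2 where "C1 = 2 ^ k * B * inverse_deriv_bound B c k"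
    and "C2 = 2 ^ k * B * inverse_deriv_bound (2 ^ k * B * B) (c * c') k"
  define A where "A = \<bar>C1\<bar> + \<bar>C2\<bar> * sqrt (L + 1)"
  show thesis
  proof (rule that[of "A * L ^ k"])
    fix m l :: real
    assume m: "1 \<le> m" and l: "L / 2 \<le> l" "l \<le> L"
    have "0 < l" "0 < c" "0 < c'"
      using assms(1) l unfolding c_def c'_def by auto
    have "c \<le> Pinf chi l"
      using assms(3) \<open>0 < l\<close> l unfolding c_def Pinf_def by force
    have "c' \<le> l / (1 + l)"
      using assms(1) l unfolding c'_def by (simp add: divide_simps) (simp add: algebra_simps)
    also have "\<dots> \<le> Pm chi m l"
      using Pm_lower_bound[of l m chi] assms(3) \<open>0 < l\<close> m by simp
    finally have "c' \<le> Pm chi m l" .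
    have bounds: "\<forall>j\<le>k. \<bar>(deriv ^^ j) (Pinf chi) l\<bar> \<le> B" "\<forall>j\<le>k. \<bar>(deriv ^^ j) (Pm chi m) l\<bar> \<le> B"
      "\<forall>j\<le>k. \<bar>(deriv ^^ j) (\<lambda>x. Pm chi m x - Pinf chi x) l\<bar> \<le> B / m\<^sup>2"
      using B[OF m l] by auto
    note quotient = Pm_Pinf_quotient_bounds[OF assms(2,3) m \<open>0 < l\<close> bounds
        \<open>0 < c\<close> \<open>c \<le> Pinf chi l\<close> \<open>0 < c'\<close> \<open>c' \<le> Pm chi m l\<close>]
    have A: "\<bar>C1\<bar> \<le> A" "\<bar>C2\<bar> * sqrt (L + 1) \<le> A"
      unfolding A_def using assms(1) by auto
    have first: "\<bar>(deriv ^^ k) (\<lambda>x. Pm chi m x / Pinf chi x) l\<bar> \<le> A"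
      using quotient(1) A(1) abs_ge_self[of C1] unfolding C1_def by linarith
    have "\<bar>(deriv ^^ k) (\<lambda>x. 1 / Pinf chi x - 1 / Pm chi m x) l\<bar> \<le> C2 * (1 / m\<^sup>2)"
      using quotient(2) unfolding C2_def by (simp add: field_simps)
    also have "\<dots> \<le> \<bar>C2\<bar> * (sqrt (L + 1) * decay_weight m l)"
      using inverse_square_le_decay_weight[OF m _ l(2)] \<open>0 < l\<close> abs_ge_self[of C2]
      by (intro mult_mono) auto
    also have "\<dots> \<le> A * decay_weight m l"
      using A(2) decay_weight_nonneg[of m l] m \<open>0 < l\<close>
      by (simp add: mult.assoc[symmetric] mult_right_mono)
    finally show "Pm_estimates chi k (A * L ^ k) m l"
      using first m l \<open>0 < l\<close> by (intro Pm_estimates_of_bounded) (auto simp: A_def)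
  qed
qed

lemma Pm_estimates_everywhere:
  assumes "0 < lam1" "smooth_on {0<..} chi" "\<And>s. 0 < s \<Longrightarrow> 0 \<le> chi s"
    and "\<And>s. 0 < s \<Longrightarrow> s < lam1 / 2 \<Longrightarrow> chi s = 1" "\<And>s. lam1 < s \<Longrightarrow> chi s = 0"
  shows "\<exists>C>0. \<forall>m l. 2 \<le> m \<and> 0 < l \<longrightarrow> Pm_estimates chi k C m l"
proof -
  obtain C_middle where middle:
    "\<And>m l. 1 \<le> m \<Longrightarrow> lam1 / 2 \<le> l \<Longrightarrow> l \<le> lam1 \<Longrightarrow> Pm_estimates chi k C_middle m l"
    using Pm_estimates_middle[OF assms(1-3)] by blast
  define C where "C = max 1 (max C_middle
    (max (fact k * 2 ^ k) (fact k * 2 ^ k * ((lam1 / 2 + 1)\<^sup>2 * sqrt (lam1 / 2 + 1)))))"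
  have "Pm_estimates chi k C m l" if "2 \<le> m" "0 < l" for m l
  proof -
    consider "l < lam1 / 2" | "lam1 / 2 \<le> l" "l \<le> lam1" | "lam1 < l"
      by linarith
    then show ?thesis
    proof cases
      case 1
      then show ?thesis
        using Pm_estimates_small[of "lam1 / 2" chi m l k] assms(4) that
        by (auto intro: Pm_estimates_mono simp: C_def)
    next
      case 2
      then show ?thesis
        using that by (intro Pm_estimates_mono[OF middle]) (auto simp: C_def)
    next
      case 3
      then show ?thesis
        using Pm_estimates_large[of lam1 chi m l k] assms(1,5) that
        by (auto intro: Pm_estimates_mono simp: C_def)
    qed
  qed
  moreover have "0 < C"
    unfolding C_def by simp
  ultimately show ?thesis
    by blast
qed

theorem propositionA2:
  fixes lam1 :: real and chi :: "real \<Rightarrow> real"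
  assumes "lam1 > 0"
    and "smooth_on {0<..} chi"
    and "\<forall>s\<ge>0. chi s \<ge> 0"
    and "\<forall>s. 0 \<le> s \<and> s < lam1 / 2 \<longrightarrow> chi s = 1"
    and "\<forall>s>lam1. chi s = 0"
  shows "\<forall>k::nat. k \<ge> 1 \<longrightarrow> (\<exists>C>0. \<forall>m::real. \<forall>l::real. m \<ge> 2 \<and> l > 0 \<longrightarrow>
           \<bar>(deriv ^^ k) (\<lambda>x. Pm chi m x / Pinf chi x) l\<bar> \<le> C / l ^ k \<and>
           \<bar>(deriv ^^ k) (\<lambda>x. 1 / Pinf chi x - 1 / Pm chi m x) l\<bar>
              \<le> C / l ^ k * min (1 / m\<^sup>2) (1 / (m * sqrt (l + 1))))"
  using Pm_estimates_everywhere[OF assms(1,2)] assms(3-5)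
  unfolding Pm_estimates_def decay_weight_def by simp

end
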